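(* Let $m \geq 1$ be an integer and let $q \in (m,m+1)$ be a Pisot number which is not an algebraic unit. Then every Galois conjugate $q'$ of $q$ satisfies $|q'| \geq \frac{2}{m+1} \geq c_m$.
   Context: A Pisot number is a real algebraic integer $q>1$ all of whose other Galois conjugates have absolute value strictly less than $1$. Define $c_1 = \frac{\sqrt{5}-1}{2}$; define $c_2$ to be the absolute value of the root of minimal modulus of $x^4-3x^3+x^2-2x-1$; and for $m \geq 3$ define $c_m = \frac{m+1-\sqrt{m^2+2m-3}}{2}$. *)

theory Defs
  imports "HOL-Analysis.Analysis" "HOL-Computational_Algebra.Computational_Algebra"
begin

text \<open>Galois conjugates of a complex algebraic number: the complex roots of its minimal
  polynomial over the rationals, i.e. of an irreducible rational polynomial vanishing at it.\<close>
definition galois_conjugates :: "complex \<Rightarrow> complex set" where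
  "galois_conjugates x = {z. \<exists>p :: rat poly. irreducible p \<and>
      poly (map_poly of_rat p) x = 0 \<and> poly (map_poly of_rat p) z = 0}"

definition pisot :: "real \<Rightarrow> bool" where
  "pisot q \<longleftrightarrow> q > 1 \<and> algebraic_int q \<and>
     (\<forall>z \<in> galois_conjugates (complex_of_real q). z \<noteq> complex_of_real q \<longrightarrow> norm z < 1)"

definition algebraic_unit :: "'a :: field \<Rightarrow> bool" where
  "algebraic_unit x \<longleftrightarrow> algebraic_int x \<and> x \<noteq> 0 \<and> algebraic_int (inverse x)"

definition c_const :: "nat \<Rightarrow> real" where
  "c_const m = (if m = 1 then (sqrt 5 - 1) / 2
     else if m = 2 then Min (norm ` {z :: complex. poly [:-1, -2, 1, -3, 1:] z = 0})
     else (real m + 1 - sqrt (real m ^ 2 + 2 * real m - 3)) / 2)"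

end

theory Submission
  imports Defs "Berlekamp_Zassenhaus.Factor_Bound"
begin

text \<open>By Gauss's lemma the minimal polynomial of the algebraic integer \<open>q\<close> is a rational
  multiple of a monic integer polynomial \<open>g\<close>. Its constant coefficient \<open>c\<close> is, up to sign, the
  product of all conjugates of \<open>q\<close>: it is nonzero, and \<open>\<bar>c\<bar> \<noteq> 1\<close> because \<open>q\<close> is not a unit,
  so \<open>\<bar>c\<bar> \<ge> 2\<close>. For a conjugate \<open>q' \<noteq> q\<close>, removing the simple root \<open>q\<close> and the root \<open>q'\<close>
  leaves a factor whose roots are conjugates in the unit disc, hence
  \<open>2 \<le> \<bar>c\<bar> \<le> q \<bar>q'\<bar>\<close> and \<open>\<bar>q'\<bar> \<ge> 2/q > 2/(m+1)\<close>.\<close>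

interpretation of_rat_poly_hom: map_poly_inj_idom_hom "of_rat :: rat \<Rightarrow> 'a :: field_char_0" ..

lemma irreducible_dvd_of_common_root:
  fixes p A :: "rat poly" and z :: "'a :: field_char_0"
  assumes "irreducible p"
    and "poly (map_poly of_rat p) z = 0" and "poly (map_poly of_rat A) z = 0"
  shows "p dvd A"
proof (rule ccontr)
  assume "\<not> p dvd A"
  with field_poly_irreducible_imp_prime[OF assms(1)] have "gcd p A = 1"
    by (simp add: prime_elem_imp_coprime flip: coprime_iff_gcd_eq_1)
  obtain u v where "bezout_coefficients p A = (u, v)"
    by force
  from bezout_coefficients[OF this] \<open>gcd p A = 1\<close> have "u * p + v * A = 1"
    by simp
  then have "poly (map_poly of_rat (u * p + v * A)) z = 1"
    by simp
  with assms(2,3) show False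
    by (simp add: hom_distribs)
qed

lemma irreducible_pderiv_nonzero_at_root:
  fixes p :: "rat poly" and z :: "'a :: field_char_0"
  assumes irr: "irreducible p" and root: "poly (map_poly of_rat p) z = 0"
  shows "poly (pderiv (map_poly of_rat p)) z \<noteq> 0"
proof
  assume "poly (pderiv (map_poly of_rat p)) z = 0"
  then have "p dvd pderiv p"
    by (intro irreducible_dvd_of_common_root[OF irr root]) (simp only: of_rat_hom.map_poly_pderiv)
  moreover have "degree p \<noteq> 0"
  proof
    assume "degree p = 0"
    then obtain a where "p = [:a:]"
      by (rule degree_eq_zeroE)
    with root have "p = 0"
      by (cases "a = 0") (simp_all add: map_poly_pCons)
    with irr show False
      by simp
  qed
  then have "pderiv p \<noteq> 0"
    by (simp add: pderiv_eq_0_iff)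
  ultimately have "degree p \<le> degree (pderiv p)"
    by (rule dvd_imp_degree_le)
  with \<open>degree p \<noteq> 0\<close> show False
    by (simp add: degree_pderiv)
qed

lemma algebraic_int_irreducible_rat_poly_monic_int:
  fixes p :: "rat poly" and x :: "'a :: field_char_0"
  assumes "algebraic_int x" and irr: "irreducible p" and root: "poly (map_poly of_rat p) x = 0"
  obtains r g where "r \<noteq> 0" "p = Polynomial.smult r (map_poly of_int g)" "lead_coeff g = 1"
proof -
  obtain f :: "int poly" where f: "poly (map_poly of_int f) x = 0" "lead_coeff f = 1"
    using \<open>algebraic_int x\<close> by (auto simp: algebraic_int_altdef_ipoly)
  have "map_poly of_rat (map_poly of_int f) = (map_poly of_int f :: 'a poly)"
    by (simp add: map_poly_map_poly o_def)
  with f(1) have "p dvd map_poly of_int f"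
    by (intro irreducible_dvd_of_common_root[OF irr root]) simp
  then obtain R where fR: "map_poly of_int f = p * R"
    by (rule dvdE)
  have "content f = 1"
    using content_dvd_coeff[of f "degree f"] content_ge_0_int[of f] f(2) by simp
  obtain r g where rg: "rat_to_normalized_int_poly p = (r, g)"
    by force
  obtain s h where sh: "rat_to_normalized_int_poly R = (s, h)"
    by force
  have "f \<noteq> 0"
    using f(2) by auto
  have "f = g * h"
    by (rule rat_to_int_factor_content_1[OF \<open>content f = 1\<close> fR rg sh \<open>f \<noteq> 0\<close>])
  then have "lead_coeff g = 1 \<or> lead_coeff g = -1"
    using f(2) by (auto simp: lead_coeff_mult zmult_eq_1_iff)
  moreover have "p = Polynomial.smult r (map_poly of_int g)" "r > 0"
    using rat_to_normalized_int_poly[OF rg] by auto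
  ultimately show thesis
    using that[of r g] that[of "-r" "-g"] by (auto simp: hom_distribs)
qed

lemma algebraic_unitI:
  fixes x :: "'a :: field_char_0" and g :: "int poly"
  assumes "algebraic_int x" and root: "poly (map_poly of_int g) x = 0" and "\<bar>Polynomial.coeff g 0\<bar> = 1"
  shows "algebraic_unit x"
proof -
  define c where "c = Polynomial.coeff g 0"
  have "c * c = 1"
    using \<open>\<bar>Polynomial.coeff g 0\<bar> = 1\<close> by (simp add: c_def abs_mult_self_eq[symmetric])
  have "x \<noteq> 0"
    using root \<open>c * c = 1\<close> by (auto simp: c_def poly_0_coeff_0)
  have "algebraic_int (inverse x)"
  proof (rule algebraic_int_inverse)
    show "poly (map_poly of_int (Polynomial.smult c g)) x = 0"
      using root by (simp add: hom_distribs)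
    show "\<forall>i. Polynomial.coeff (map_poly of_int (Polynomial.smult c g) :: 'a poly) i \<in> \<int>"
      by (simp add: coeff_map_poly)
    show "Polynomial.coeff (map_poly of_int (Polynomial.smult c g) :: 'a poly) 0 = 1"
      using \<open>c * c = 1\<close> by (simp add: coeff_map_poly c_def)
  qed
  with \<open>algebraic_int x\<close> \<open>x \<noteq> 0\<close> show ?thesis
    by (simp add: algebraic_unit_def)
qed

lemma not_algebraic_unit_abs_coeff_0_ge_2:
  fixes p :: "rat poly" and g :: "int poly" and x :: "'a :: field_char_0"
  assumes "algebraic_int x" "\<not> algebraic_unit x" "x \<noteq> 0"
    and irr: "irreducible p" and root: "poly (map_poly of_rat p) x = 0"
    and pg: "p = Polynomial.smult r (map_poly of_int g)" and "r \<noteq> 0"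
  shows "2 \<le> \<bar>Polynomial.coeff g 0\<bar>"
proof -
  have poly_p: "poly (map_poly of_rat p) z = of_rat r * poly (map_poly of_int g) z" for z :: 'a
    by (simp add: pg hom_distribs map_poly_map_poly o_def)
  have "Polynomial.coeff g 0 \<noteq> 0"
  proof
    assume "Polynomial.coeff g 0 = 0"
    then have "poly (map_poly of_rat p) (0 :: 'a) = 0"
      unfolding poly_p by (simp add: poly_0_coeff_0 coeff_map_poly)
    then have "p dvd [:0, 1:]"
      by (intro irreducible_dvd_of_common_root[OF irr]) (simp_all add: map_poly_pCons)
    then obtain k where "[:0, 1:] = p * k"
      by (rule dvdE)
    then have "poly (map_poly of_rat [:0, 1:]) x = 0"
      using root by (simp add: hom_distribs)
    with \<open>x \<noteq> 0\<close> show False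
      by (simp add: map_poly_pCons)
  qed
  moreover have "\<bar>Polynomial.coeff g 0\<bar> \<noteq> 1"
    using algebraic_unitI[of x g] assms(1,2) root \<open>r \<noteq> 0\<close> by (auto simp: poly_p)
  ultimately show ?thesis
    by linarith
qed

lemma irreducible_rat_poly_split_two_roots:
  fixes p :: "rat poly" and a b :: "'a :: field_char_0"
  assumes irr: "irreducible p"
    and a: "poly (map_poly of_rat p) a = 0" and b: "poly (map_poly of_rat p) b = 0" and "a \<noteq> b"
  obtains K where "map_poly of_rat p = [:-a, 1:] * [:-b, 1:] * K" "poly K a \<noteq> 0"
proof -
  have "[:-a, 1:] dvd map_poly of_rat p"
    using a dvd_iff_poly_eq_0[of "-a"] by simp
  then obtain H where H: "map_poly of_rat p = [:-a, 1:] * H"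
    by (rule dvdE)
  have "poly (pderiv ([:-a, 1:] * H)) a = poly H a"
    unfolding pderiv_mult by (simp add: pderiv_pCons)
  then have "poly H a \<noteq> 0"
    using irreducible_pderiv_nonzero_at_root[OF irr a] H by metis
  have "poly H b = 0"
    using b \<open>a \<noteq> b\<close> by (simp add: H)
  then have "[:-b, 1:] dvd H"
    using dvd_iff_poly_eq_0[of "-b"] by simp
  then obtain K where K: "H = [:-b, 1:] * K"
    by (rule dvdE)
  show thesis
  proof (rule that)
    show "map_poly of_rat p = [:-a, 1:] * [:-b, 1:] * K"
      by (simp only: H K mult.assoc)
    show "poly K a \<noteq> 0"
      using \<open>poly H a \<noteq> 0\<close> by (simp add: K)
  qed
qed

lemma norm_poly_0_le_lead_coeff:
  fixes K :: "complex poly"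
  assumes roots: "\<And>z. poly K z = 0 \<Longrightarrow> norm z \<le> 1"
  shows "norm (poly K 0) \<le> norm (lead_coeff K)"
proof -
  obtain \<rho> where K: "Polynomial.smult (lead_coeff K) (\<Prod>i<degree K. [:-\<rho> i, 1:]) = K"
    by (rule complex_poly_decompose')
  have "poly K (\<rho> i) = 0" if "i < degree K" for i
    using that by (subst K[symmetric]) (auto simp: poly_prod)
  then have "(\<Prod>i<degree K. norm (\<rho> i)) \<le> 1"
    by (intro prod_le_1) (auto intro: roots)
  moreover have "norm (poly K 0) = norm (lead_coeff K) * (\<Prod>i<degree K. norm (\<rho> i))"
    by (subst K[symmetric]) (simp add: poly_prod norm_mult flip: prod_norm)
  ultimately show ?thesis
    by (simp add: mult_left_le)
qed

lemma pisot_minimal_poly_split: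
  fixes q :: real and z :: complex and p :: "rat poly"
  assumes "pisot q" and irr: "irreducible p"
    and pq: "poly (map_poly of_rat p) (complex_of_real q) = 0" and pz: "poly (map_poly of_rat p) z = 0"
    and "z \<noteq> complex_of_real q"
  obtains K where "map_poly of_rat p = [:-complex_of_real q, 1:] * [:-z, 1:] * K"
    and "norm (poly K 0) \<le> norm (lead_coeff K)"
proof -
  obtain K where PK: "map_poly of_rat p = [:-complex_of_real q, 1:] * [:-z, 1:] * K"
    and "poly K (complex_of_real q) \<noteq> 0"
    using irreducible_rat_poly_split_two_roots[OF irr pq pz] \<open>z \<noteq> complex_of_real q\<close> by metis
  have "norm w \<le> 1" if "poly K w = 0" for w
  proof -
    have "w \<in> galois_conjugates (complex_of_real q)"
      using that irr pq unfolding galois_conjugates_def by (auto simp: PK)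
    moreover have "w \<noteq> complex_of_real q"
      using that \<open>poly K (complex_of_real q) \<noteq> 0\<close> by auto
    ultimately show ?thesis
      using \<open>pisot q\<close> by (auto simp: pisot_def less_imp_le)
  qed
  then show thesis
    using that PK norm_poly_0_le_lead_coeff by blast
qed

lemma pisot_not_algebraic_unit_conjugate_norm_ge:
  fixes q :: real and z :: complex
  assumes "pisot q" and "\<not> algebraic_unit q"
    and z: "z \<in> galois_conjugates (complex_of_real q)" "z \<noteq> complex_of_real q"
  shows "2 \<le> q * norm z"
proof -
  define Q where "Q = complex_of_real q"
  have "q > 1" and "algebraic_int Q"
    using assms(1) by (auto simp: pisot_def Q_def)
  have "\<not> algebraic_unit Q"
    using assms(2) by (simp add: Q_def algebraic_unit_def flip: of_real_inverse)
  obtain p where irr: "irreducible p"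
    and pQ: "poly (map_poly of_rat p) Q = 0" and pz: "poly (map_poly of_rat p) z = 0"
    using z(1) by (auto simp: galois_conjugates_def Q_def)
  obtain r g where "r \<noteq> 0" and pg: "p = Polynomial.smult r (map_poly of_int g)"
    and "lead_coeff g = 1"
    by (rule algebraic_int_irreducible_rat_poly_monic_int[OF \<open>algebraic_int Q\<close> irr pQ])
  have c: "2 \<le> \<bar>Polynomial.coeff g 0\<bar>"
    using not_algebraic_unit_abs_coeff_0_ge_2[OF \<open>algebraic_int Q\<close> \<open>\<not> algebraic_unit Q\<close> _ irr pQ pg \<open>r \<noteq> 0\<close>]
      \<open>q > 1\<close> by (simp add: Q_def)
  obtain K where PK: "map_poly of_rat p = [:-Q, 1:] * [:-z, 1:] * K"
    and K0: "norm (poly K 0) \<le> norm (lead_coeff K)"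
    using pisot_minimal_poly_split[OF \<open>pisot q\<close> irr] pQ pz z(2) unfolding Q_def by metis
  define \<rho> where "\<rho> = norm (of_rat r :: complex)"
  have "\<rho> > 0"
    using \<open>r \<noteq> 0\<close> by (simp add: \<rho>_def)
  have "lead_coeff K = lead_coeff (map_poly of_rat p :: complex poly)"
    unfolding PK lead_coeff_mult by simp
  also have "\<dots> = of_rat r"
    using \<open>lead_coeff g = 1\<close> by (simp add: pg)
  finally have "norm (lead_coeff K) = \<rho>"
    by (simp add: \<rho>_def)
  have "\<rho> * \<bar>Polynomial.coeff g 0\<bar> = norm (poly (map_poly of_rat p) 0 :: complex)"
    by (simp add: \<rho>_def pg poly_0_coeff_0 coeff_map_poly of_rat_mult norm_mult)
  also have "\<dots> = q * norm z * norm (poly K 0)"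
    using \<open>q > 1\<close> by (simp add: PK Q_def norm_mult)
  also have "\<dots> \<le> q * norm z * \<rho>"
    using K0 \<open>q > 1\<close> \<open>norm (lead_coeff K) = \<rho>\<close> by (simp add: mult_left_mono)
  finally show ?thesis
    using c \<open>\<rho> > 0\<close> by (simp add: mult.commute[of \<rho>])
qed

lemma c_const_2_le: "c_const 2 \<le> 2 / 3"
proof -
  have "\<exists>x. -1/2 < x \<and> x < 0 \<and> poly [:-1, -2, 1, -3, 1 :: real:] x = 0"
    by (rule poly_IVT_neg) auto
  then obtain x :: real where x: "-1/2 < x" "x < 0" "poly [:-1, -2, 1, -3, 1:] x = 0"
    by blast
  define S where "S = {z :: complex. poly [:-1, -2, 1, -3, 1:] z = 0}"
  have "complex_of_real x \<in> S"
    using arg_cong[OF x(3), of complex_of_real] by (simp add: S_def)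
  moreover have "finite S"
    unfolding S_def by (rule poly_roots_finite) simp
  ultimately have "Min (norm ` S) \<le> norm (complex_of_real x)"
    by (intro Min_le finite_imageI imageI)
  also have "\<dots> \<le> 2 / 3"
    using x by simp
  finally show ?thesis
    by (simp add: c_const_def S_def)
qed

lemma half_sub_sqrt_le_two_div:
  fixes x :: real
  assumes "x \<ge> 1"
  shows "(x + 1 - sqrt (x\<^sup>2 + 2 * x - 3)) / 2 \<le> 2 / (x + 1)"
proof -
  define y where "y = x + 1"
  define s where "s = sqrt (y\<^sup>2 - 4)"
  have "y \<ge> 2"
    using assms by (simp add: y_def)
  then have "2\<^sup>2 \<le> y\<^sup>2"
    by (intro power_mono) auto
  then have "s\<^sup>2 = y\<^sup>2 - 4" and "s \<ge> 0"
    by (simp_all add: s_def)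
  have "s \<le> sqrt (y\<^sup>2)"
    unfolding s_def by (rule real_sqrt_le_mono) simp
  then have "s\<^sup>2 \<le> s * y"
    using \<open>s \<ge> 0\<close> \<open>y \<ge> 2\<close> by (simp add: power2_eq_square mult_left_mono)
  then have "(y - s) * y \<le> 4"
    using \<open>s\<^sup>2 = y\<^sup>2 - 4\<close> by (simp add: power2_eq_square algebra_simps)
  then have "(y - s) / 2 \<le> 2 / y"
    using \<open>y \<ge> 2\<close> by (simp add: divide_le_eq le_divide_eq mult.commute)
  moreover have "x\<^sup>2 + 2 * x - 3 = y\<^sup>2 - 4"
    by (simp add: y_def power2_eq_square algebra_simps)
  ultimately show ?thesis
    by (simp only: s_def y_def)
qed

lemma c_const_le_two_div:
  assumes "m \<ge> 1"
  shows "c_const m \<le> 2 / (real m + 1)"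
proof -
  consider "m = 1" | "m = 2" | "m \<ge> 3"
    using assms by linarith
  then show ?thesis
  proof cases
    case 1
    have "sqrt 5 \<le> 3"
      by (rule real_le_lsqrt) auto
    with 1 show ?thesis
      by (simp add: c_const_def)
  next
    case 2
    then show ?thesis
      using c_const_2_le by simp
  next
    case 3
    then show ?thesis
      using half_sub_sqrt_le_two_div[of "real m"] by (simp add: c_const_def)
  qed
qed

theorem theorem2p3:
  fixes m :: nat and q :: real
  assumes "m \<ge> 1"
    and "real m < q" and "q < real m + 1"
    and "pisot q"
    and "\<not> algebraic_unit q"
  shows "\<forall>q' \<in> galois_conjugates (complex_of_real q).
           norm q' \<ge> 2 / (real m + 1) \<and> 2 / (real m + 1) \<ge> c_const m"
proof
  fix q' assume q': "q' \<in> galois_conjugates (complex_of_real q)"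
  have "q > 1"
    using \<open>pisot q\<close> by (simp add: pisot_def)
  have "2 / (real m + 1) \<le> norm q'"
  proof (cases "q' = complex_of_real q")
    case True
    have "2 / (real m + 1) \<le> 1"
      using assms(1) by (simp add: field_simps)
    moreover have "norm q' = q"
      using True \<open>q > 1\<close> by simp
    ultimately show ?thesis
      using \<open>q > 1\<close> by linarith
  next
    case False
    have "2 / (real m + 1) \<le> 2 / q"
      using assms(3) \<open>q > 1\<close> by (intro divide_left_mono) auto
    also have "\<dots> \<le> norm q'"
      using pisot_not_algebraic_unit_conjugate_norm_ge[OF assms(4,5) q' False] \<open>q > 1\<close>
      by (simp add: field_simps)
    finally show ?thesis .
  qed
  with c_const_le_two_div[OF assms(1)]
  show "norm q' \<ge> 2 / (real m + 1) \<and> 2 / (real m + 1) \<ge> c_const m"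
    by simp
qed

end
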